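(* Let $p\in\{2,3\}$. Let $\rho_{X^{\mathrm B}X^{\mathrm C}BC}$ be a classical-quantum state where $X^{\mathrm B},X^{\mathrm C}$ are classical registers taking values in $\mathbb{F}_p^l$, and $B$ and $C$ are quantum registers held by Bob and Charlie respectively. Suppose that for any measurements Bob and Charlie perform on their registers producing outputs $G^{\mathrm B},G^{\mathrm C}$, we have $\Pr[G^{\mathrm B}=X^{\mathrm B}\wedge G^{\mathrm C}=X^{\mathrm C}]\le\delta$. Let $\mathsf{r}^{\mathrm B},\mathsf{r}^{\mathrm C}$ be independent and uniformly distributed in $\mathbb{F}_p^l$ (independent of the state), given to Bob and Charlie respectively, who then perform measurements on their quantum registers depending on $\mathsf r^{\mathrm B}$ and $\mathsf r^{\mathrm C}$ respectively, producing outputs $G^{\mathrm B}(\mathsf r^{\mathrm B}),G^{\mathrm C}(\mathsf r^{\mathrm C})\in\mathbb F_p$. Then \[\Pr\left[\bigvee_{\substack{j,k\in\mathbb F_p:\\ j+k=0 \bmod p}}\left(G^{\mathrm B}(\mathsf r^{\mathrm B})=X^{\mathrm B}\cdot\mathsf r^{\mathrm B}+j\right)\wedge\left(G^{\mathrm C}(\mathsf r^{\mathrm C})=X^{\mathrm C}\cdot\mathsf r^{\mathrm C}+k\right)\right]\le\frac1p+O(\delta^{1/3}),\] where the probability is over $X^{\mathrm B}X^{\mathrm C}$, $\mathsf r^{\mathrm B}\mathsf r^{\mathrm C}$ and the measurements, and $\cdot$ denotes the inner product over $\mathbb F_p$.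
   Context: Bob and Charlie act on their own registers only and do not communicate. The constant in $O(\cdot)$ is absolute. *)

theory Defs
  imports Complex_Main "Jordan_Normal_Form.Matrix"
begin

text \<open>Finite-dimensional quantum registers: operators are complex square matrices
  (Jordan_Normal_Form). Elements of F_p^l are lists of length l with entries in {0..<p}.\<close>

definition Fpl :: "nat \<Rightarrow> nat \<Rightarrow> nat list set" where
  "Fpl p l = {x. length x = l \<and> set x \<subseteq> {0..<p}}"

definition dotp :: "nat \<Rightarrow> nat list \<Rightarrow> nat list \<Rightarrow> nat" where
  "dotp p x r = (\<Sum>i<length x. x ! i * r ! i) mod p"

definition mtrace :: "complex mat \<Rightarrow> complex" where
  "mtrace A = (\<Sum>i<dim_row A. A $$ (i, i))"

definition psd :: "nat \<Rightarrow> complex mat \<Rightarrow> bool" where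
  "psd d A \<longleftrightarrow> A \<in> carrier_mat d d \<and>
     (\<forall>v \<in> carrier_vec d. (conjugate v \<bullet> (A *\<^sub>v v)) \<in> \<real> \<and> 0 \<le> Re (conjugate v \<bullet> (A *\<^sub>v v)))"

definition kron :: "complex mat \<Rightarrow> complex mat \<Rightarrow> complex mat" where
  "kron A B = mat (dim_row A * dim_row B) (dim_col A * dim_col B)
     (\<lambda>(i, j). A $$ (i div dim_row B, j div dim_col B) * B $$ (i mod dim_row B, j mod dim_col B))"

definition is_povm :: "nat \<Rightarrow> 'o set \<Rightarrow> ('o \<Rightarrow> complex mat) \<Rightarrow> bool" where
  "is_povm d Outs M \<longleftrightarrow> finite Outs \<and> (\<forall>w \<in> Outs. psd d (M w)) \<and>
     (\<forall>i<d. \<forall>j<d. (\<Sum>w\<in>Outs. M w $$ (i, j)) = (if i = j then 1 else 0))"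

text \<open>A cq-state on X^B X^C B C: rho xB xC is the (subnormalised) operator
  Pr[X^B = xB, X^C = xC] * rho^{BC}_{xB xC} on B (dim dB) tensor C (dim dC).\<close>
definition cq_state :: "nat \<Rightarrow> nat \<Rightarrow> nat \<Rightarrow> nat \<Rightarrow> (nat list \<Rightarrow> nat list \<Rightarrow> complex mat) \<Rightarrow> bool" where
  "cq_state p l dB dC \<rho> \<longleftrightarrow>
     (\<forall>xB \<in> Fpl p l. \<forall>xC \<in> Fpl p l. psd (dB * dC) (\<rho> xB xC)) \<and>
     (\<Sum>xB \<in> Fpl p l. \<Sum>xC \<in> Fpl p l. mtrace (\<rho> xB xC)) = 1"

definition guess_prob :: "nat \<Rightarrow> nat \<Rightarrow> (nat list \<Rightarrow> nat list \<Rightarrow> complex mat)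
    \<Rightarrow> (nat list \<Rightarrow> complex mat) \<Rightarrow> (nat list \<Rightarrow> complex mat) \<Rightarrow> real" where
  "guess_prob p l \<rho> M N =
     (\<Sum>xB \<in> Fpl p l. \<Sum>xC \<in> Fpl p l. Re (mtrace (kron (M xB) (N xC) * \<rho> xB xC)))"

definition win_event :: "nat \<Rightarrow> nat list \<Rightarrow> nat list \<Rightarrow> nat list \<Rightarrow> nat list \<Rightarrow> nat \<Rightarrow> nat \<Rightarrow> bool" where
  "win_event p xB xC rB rC a b \<longleftrightarrow>
     (\<exists>j<p. \<exists>k<p. (j + k) mod p = 0 \<and>
        a = (dotp p xB rB + j) mod p \<and> b = (dotp p xC rC + k) mod p)"

definition win_prob :: "nat \<Rightarrow> nat \<Rightarrow> (nat list \<Rightarrow> nat list \<Rightarrow> complex mat)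
    \<Rightarrow> (nat list \<Rightarrow> nat \<Rightarrow> complex mat) \<Rightarrow> (nat list \<Rightarrow> nat \<Rightarrow> complex mat) \<Rightarrow> real" where
  "win_prob p l \<rho> P Q =
     (\<Sum>xB \<in> Fpl p l. \<Sum>xC \<in> Fpl p l. \<Sum>rB \<in> Fpl p l. \<Sum>rC \<in> Fpl p l.
        (1 / real p ^ (2 * l)) *
        (\<Sum>a<p. \<Sum>b<p. if win_event p xB xC rB rC a b
            then Re (mtrace (kron (P rB a) (Q rC b) * \<rho> xB xC)) else 0))"

end

(*
  Let w = exp (2 pi i / p).  Bob and Charlie win iff G^B + G^C - X^B.r^B - X^C.r^C vanishes in Z/p,
  so the indicator of winning is (1/p) sum_t w^(t(...)) and the winning probability is the average
  over t < p of  bias t = Re sum_{x,y} tr (rho_xy (A_{t,x} (x) B_{t,y})),  where A_{t,x} is the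
  Fourier transform in r of Bob's observable sum_a w^(ta) P^a_r, and B_{t,y} likewise for Charlie.
  The term t = 0 equals 1.  For t <> 0, Cauchy-Schwarz bounds bias t by the square root of
  sum_{x,y} tr (rho_xy (A*A (x) B*B)).  The observables are contractions and, p being prime, the
  characters of F_p^l are orthogonal, so Parseval gives sum_x A_{t,x}* A_{t,x} <= 1.  Completing
  these operators to POVMs yields guessing measurements for Bob and Charlie, hence the square is at
  most min delta 1, and the winning probability is at most 1/p + min (sqrt delta) 1 <= 1/p + delta^(1/3).
*)
theory Submission
  imports Defs "HOL-Analysis.Convex" "HOL-Computational_Algebra.Primes"
begin

section \<open>Positive semidefinite kernels\<close>

text \<open>Operators are handled through their entry functions \<open>nat \<Rightarrow> nat \<Rightarrow> complex\<close>; every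
  statement only constrains the entries below the relevant dimension.\<close>

abbreviation entries :: "complex mat \<Rightarrow> nat \<Rightarrow> nat \<Rightarrow> complex" where
  "entries A \<equiv> \<lambda>i j. A $$ (i, j)"

abbreviation kdelta :: "nat \<Rightarrow> nat \<Rightarrow> complex" where
  "kdelta \<equiv> \<lambda>i j. if i = j then 1 else 0"

definition qform :: "nat \<Rightarrow> (nat \<Rightarrow> nat \<Rightarrow> complex) \<Rightarrow> (nat \<Rightarrow> complex) \<Rightarrow> complex" where
  "qform d B f = (\<Sum>i<d. \<Sum>j<d. cnj (f i) * B i j * f j)"

definition pos_semidef :: "nat \<Rightarrow> (nat \<Rightarrow> nat \<Rightarrow> complex) \<Rightarrow> bool" where
  "pos_semidef d B \<longleftrightarrow> (\<forall>f. qform d B f \<in> \<real> \<and> 0 \<le> Re (qform d B f))"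

definition adj_mult :: "nat \<Rightarrow> (nat \<Rightarrow> nat \<Rightarrow> complex) \<Rightarrow> nat \<Rightarrow> nat \<Rightarrow> complex" where
  "adj_mult d X i j = (\<Sum>k<d. cnj (X k i) * X k j)"

lemma scalar_prod_mult_mat_vec_eq_qform:
  assumes "A \<in> carrier_mat d d"
  shows "conjugate (vec d f) \<bullet> (A *\<^sub>v vec d f) = qform d (entries A) f"
  using assms unfolding qform_def scalar_prod_def mult_mat_vec_def
  by (auto simp: lessThan_atLeast0 sum_distrib_left mult.assoc intro!: sum.cong)

lemma psd_iff_pos_semidef: "psd d A \<longleftrightarrow> A \<in> carrier_mat d d \<and> pos_semidef d (entries A)"
proof -
  have "conjugate v \<bullet> (A *\<^sub>v v) = qform d (entries A) (\<lambda>i. v $ i)"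
    if "A \<in> carrier_mat d d" "v \<in> carrier_vec d" for v
    using scalar_prod_mult_mat_vec_eq_qform[OF that(1), of "\<lambda>i. v $ i"] that(2)
    by (metis carrier_vecD eq_vecI dim_vec index_vec)
  moreover have "vec d f \<in> carrier_vec d" for f by simp
  ultimately show ?thesis
    unfolding psd_def pos_semidef_def by (metis scalar_prod_mult_mat_vec_eq_qform)
qed

lemma qform_cong: "(\<And>i j. i < d \<Longrightarrow> j < d \<Longrightarrow> B i j = B' i j) \<Longrightarrow> qform d B f = qform d B' f"
  unfolding qform_def by simp

lemma pos_semidef_cong:
  "pos_semidef d B \<Longrightarrow> (\<And>i j. i < d \<Longrightarrow> j < d \<Longrightarrow> B i j = B' i j) \<Longrightarrow> pos_semidef d B'"
  unfolding pos_semidef_def using qform_cong by metis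

lemma qform_add: "qform d (\<lambda>i j. B i j + B' i j) f = qform d B f + qform d B' f"
  unfolding qform_def by (simp add: algebra_simps sum.distrib)

lemma qform_diff: "qform d (\<lambda>i j. B i j - B' i j) f = qform d B f - qform d B' f"
  unfolding qform_def by (simp add: algebra_simps sum_subtractf)

lemma qform_scale: "qform d (\<lambda>i j. c * B i j) f = c * qform d B f"
  unfolding qform_def by (simp add: sum_distrib_left mult_ac)

lemma qform_sum: "qform d (\<lambda>i j. \<Sum>a\<in>S. B a i j) f = (\<Sum>a\<in>S. qform d (B a) f)"
  unfolding qform_def by (simp add: sum_distrib_left sum_distrib_right sum.swap[where A = S])

lemma qform_kdelta: "qform d kdelta f = of_real (\<Sum>j<d. (cmod (f j))\<^sup>2)"
  unfolding qform_def of_real_sum complex_norm_square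
  by (simp add: if_distrib if_distribR sum.delta mult.commute cong: if_cong)

lemma pos_semidef_add: "pos_semidef d B \<Longrightarrow> pos_semidef d B' \<Longrightarrow> pos_semidef d (\<lambda>i j. B i j + B' i j)"
  unfolding pos_semidef_def qform_add by auto

lemma pos_semidef_if: "(P \<Longrightarrow> pos_semidef d B) \<Longrightarrow> pos_semidef d (\<lambda>i j. if P then B i j else 0)"
  by (cases P) (simp_all add: pos_semidef_def qform_def)

lemma sesq_adj_mult:
  "(\<Sum>i<d. \<Sum>j<d. cnj (g i) * adj_mult d' X i j * f j) =
    (\<Sum>k<d'. cnj (\<Sum>i<d. X k i * g i) * (\<Sum>j<d. X k j * f j))"
  unfolding adj_mult_def cnj_sum sum_product
  by (simp add: sum_distrib_left sum_distrib_right sum.swap[where A = "{..<d'}"] mult_ac)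

lemma qform_adj_mult: "qform d (adj_mult d' X) f = of_real (\<Sum>k<d'. (cmod (\<Sum>j<d. X k j * f j))\<^sup>2)"
  unfolding qform_def sesq_adj_mult of_real_sum complex_norm_square by (simp add: mult.commute)

lemma pos_semidef_adj_mult: "pos_semidef d (adj_mult d' X)"
  unfolding pos_semidef_def qform_adj_mult by (auto intro: sum_nonneg)

lemma if_zero_simps:
  fixes x y :: complex
  shows "(if P then x else 0) * y = (if P then x * y else 0)"
    and "y * (if P then x else 0) = (if P then y * x else 0)"
    and "cnj (if P then x else 0) = (if P then cnj x else 0)"
    and "(\<Sum>j\<in>A. if P then g j else 0) = (if P then sum g A else 0)"
  by simp_all

lemma qform_point:
  assumes "i < d"
  shows "qform d B (\<lambda>k. if k = i then a else 0) = cnj a * a * B i i"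
  unfolding qform_def using assms by (simp add: if_zero_simps sum.delta)

lemma qform_two_points:
  assumes "i < d" "j < d" "i \<noteq> j"
  shows "qform d B (\<lambda>k. if k = i then a else if k = j then b else 0) =
    cnj a * a * B i i + cnj a * b * B i j + cnj b * a * B j i + cnj b * b * B j j"
proof -
  have split: "(\<lambda>k. if k = i then a else if k = j then b else 0) =
      (\<lambda>k. (if k = i then a else 0) + (if k = j then b else 0))"
    using assms by auto
  show ?thesis
    unfolding qform_def split using assms
    by (simp add: ring_distribs sum.distrib if_zero_simps sum.delta)
qed

lemma pos_semidef_diag:
  assumes "pos_semidef d B" "i < d"
  shows "B i i \<in> \<real>" "0 \<le> Re (B i i)"
  using assms qform_point[of i d B 1] unfolding pos_semidef_def by (metis complex_cnj_one mult_1)+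

lemma pos_semidef_hermitian:
  assumes B: "pos_semidef d B" and ij: "i < d" "j < d"
  shows "B j i = cnj (B i j)"
proof (cases "i = j")
  case True
  then show ?thesis using pos_semidef_diag[OF B ij(1)] by (simp add: Reals_cnj_iff)
next
  case False
  have "qform d B (\<lambda>k. if k = i then 1 else if k = j then 1 else 0) \<in> \<real>"
    and "qform d B (\<lambda>k. if k = i then 1 else if k = j then \<i> else 0) \<in> \<real>"
    using B unfolding pos_semidef_def by blast+
  moreover have "Im (B i i) = 0" "Im (B j j) = 0"
    using pos_semidef_diag[OF B] ij complex_is_Real_iff by auto
  ultimately have "Im (B i j) + Im (B j i) = 0" "Re (B i j) - Re (B j i) = 0"
    unfolding qform_two_points[OF ij False] complex_is_Real_iff by simp_all
  then show ?thesis by (intro complex_eqI) auto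
qed

text \<open>Otherwise the form would be negative at \<open>e\<^sub>j - t B\<^sub>s\<^sub>j e\<^sub>s\<close> for large \<open>t\<close>.\<close>
lemma pos_semidef_zero_diag_row:
  assumes B: "pos_semidef d B" and s: "s < d" "j < d" and zero: "B s s = 0"
  shows "B s j = 0"
proof (rule ccontr)
  assume nz: "B s j \<noteq> 0"
  then have "s \<noteq> j" using zero by auto
  define N where "N = (cmod (B s j))\<^sup>2"
  have N: "N > 0" using nz N_def by simp
  define t where "t = (\<bar>Re (B j j)\<bar> + 1) / (2 * N)"
  define c where "c = - of_real t * B s j"
  have "0 \<le> Re (qform d B (\<lambda>k. if k = s then c else if k = j then 1 else 0))"
    using B unfolding pos_semidef_def by blast
  also have "qform d B (\<lambda>k. if k = s then c else if k = j then 1 else 0) =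
      cnj c * B s j + c * cnj (B s j) + B j j"
    unfolding qform_two_points[OF s \<open>s \<noteq> j\<close>] pos_semidef_hermitian[OF B s] zero by simp
  also have "cnj c * B s j = - of_real (t * N)"
    using complex_norm_square[of "B s j"] unfolding c_def N_def by (simp add: mult_ac)
  also have "c * cnj (B s j) = - of_real (t * N)"
    using complex_norm_square[of "B s j"] unfolding c_def N_def by (simp add: mult_ac)
  finally have "0 \<le> - 2 * t * N + Re (B j j)" by (simp add: algebra_simps)
  moreover have "2 * t * N = \<bar>Re (B j j)\<bar> + 1" unfolding t_def using N by simp
  ultimately show False by linarith
qed

lemma pos_semidef_schur_complement:
  assumes B: "pos_semidef d B" and s: "s < d" and nz: "B s s \<noteq> 0"
  shows "pos_semidef d (\<lambda>i j. B i j - B i s * B s j / B s s)"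
  unfolding pos_semidef_def
proof
  fix f
  define \<beta> where "\<beta> = (\<Sum>j<d. B s j * f j)"
  define \<gamma> where "\<gamma> = (\<Sum>i<d. cnj (f i) * B i s)"
  define c where "c = \<beta> / B s s"
  have real: "cnj (B s s) = B s s" using pos_semidef_diag[OF B s] by (simp add: Reals_cnj_iff)
  have \<gamma>: "\<gamma> = cnj \<beta>"
    unfolding \<gamma>_def \<beta>_def using pos_semidef_hermitian[OF B s] by (auto intro!: sum.cong)
  have expand: "qform d B (\<lambda>k. f k - g k) = qform d B f - (\<Sum>i<d. \<Sum>j<d. cnj (f i) * B i j * g j)
      - (\<Sum>i<d. \<Sum>j<d. cnj (g i) * B i j * f j) + qform d B g" for g
    unfolding qform_def by (simp add: algebra_simps sum_subtractf sum.distrib)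
  \<comment> \<open>The form of the complement at \<open>f\<close> is the form of \<open>B\<close> at \<open>f - c e\<^sub>s\<close>.\<close>
  have "qform d B (\<lambda>k. f k - (if k = s then c else 0)) = qform d B f - \<gamma> * c - cnj c * \<beta> + cnj c * c * B s s"
    unfolding expand using s
    by (simp add: if_zero_simps sum.delta qform_point \<gamma>_def \<beta>_def sum_distrib_left sum_distrib_right algebra_simps)
  also have "\<dots> = qform d B f - \<gamma> * \<beta> / B s s"
    unfolding c_def \<gamma> using nz real by (simp add: field_simps)
  also have "\<dots> = qform d (\<lambda>i j. B i j - B i s * B s j / B s s) f"
    unfolding qform_def \<gamma>_def \<beta>_def
    by (simp add: algebra_simps sum_subtractf sum_distrib_left sum_distrib_right sum_divide_distrib)
  finally show "qform d (\<lambda>i j. B i j - B i s * B s j / B s s) f \<in> \<real> \<and>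
      0 \<le> Re (qform d (\<lambda>i j. B i j - B i s * B s j / B s s) f)"
    using B unfolding pos_semidef_def by metis
qed

lemma pos_semidef_split_rank_one:
  assumes B: "pos_semidef d B" and s: "s < d"
    and zero: "\<forall>i<d. \<forall>j<d. (i < s \<or> j < s) \<longrightarrow> B i j = 0"
  obtains g where "pos_semidef d (\<lambda>i j. B i j - g i * cnj (g j))"
    and "\<forall>i<d. \<forall>j<d. (i < Suc s \<or> j < Suc s) \<longrightarrow> B i j - g i * cnj (g j) = 0"
proof (cases "B s s = 0")
  case True
  have "B s j = 0" "B j s = 0" if "j < d" for j
    using pos_semidef_zero_diag_row[OF B s that True] pos_semidef_hermitian[OF B s that] by simp_all
  with zero have "\<forall>i<d. \<forall>j<d. (i < Suc s \<or> j < Suc s) \<longrightarrow> B i j = 0"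
    by (metis less_SucE)
  with B show ?thesis using that[of "\<lambda>_. 0"] by simp
next
  case False
  have real: "B s s = of_real (Re (B s s))"
    using pos_semidef_diag[OF B s] by (simp add: complex_is_Real_iff complex_eq_iff)
  have "Re (B s s) \<noteq> 0" using False real by (metis of_real_0)
  then have pos: "Re (B s s) > 0" using pos_semidef_diag(2)[OF B s] by linarith
  define g where "g i = B i s / of_real (sqrt (Re (B s s)))" for i
  have "of_real (sqrt (Re (B s s))) * of_real (sqrt (Re (B s s))) = (of_real (Re (B s s)) :: complex)"
    using pos by (simp flip: of_real_mult)
  then have gg: "g i * cnj (g j) = B i s * B s j / B s s" if "j < d" for i j
    unfolding g_def using pos_semidef_hermitian[OF B s that] real by simp
  show ?thesis
  proof (rule that)
    show "pos_semidef d (\<lambda>i j. B i j - g i * cnj (g j))"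
      by (rule pos_semidef_cong[OF pos_semidef_schur_complement[OF B s False]]) (simp add: gg)
    show "\<forall>i<d. \<forall>j<d. (i < Suc s \<or> j < Suc s) \<longrightarrow> B i j - g i * cnj (g j) = 0"
    proof (intro allI impI)
      fix i j assume ij: "i < d" "j < d" "i < Suc s \<or> j < Suc s"
      show "B i j - g i * cnj (g j) = 0"
      proof (cases "i < s \<or> j < s")
        case True
        then show ?thesis using zero ij s gg[OF ij(2)] by auto
      next
        case False
        then have "i = s \<or> j = s" using ij(3) by auto
        then show ?thesis using gg[OF ij(2)] \<open>B s s \<noteq> 0\<close> by auto
      qed
    qed
  qed
qed

text \<open>Cholesky factorisation, peeling off one row and column at a time.\<close>
lemma pos_semidef_adj_mult_factor_from:
  "pos_semidef d B \<Longrightarrow> \<forall>i<d. \<forall>j<d. (i < s \<or> j < s) \<longrightarrow> B i j = 0 \<Longrightarrow>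
    \<exists>X. \<forall>i<d. \<forall>j<d. B i j = (\<Sum>k\<in>{s..<d}. cnj (X k i) * X k j)"
proof (induction "d - s" arbitrary: s B)
  case 0
  then show ?case by auto
next
  case (Suc n)
  then have s: "s < d" by simp
  obtain g where psd: "pos_semidef d (\<lambda>i j. B i j - g i * cnj (g j))"
    and zero: "\<forall>i<d. \<forall>j<d. (i < Suc s \<or> j < Suc s) \<longrightarrow> B i j - g i * cnj (g j) = 0"
    using pos_semidef_split_rank_one[OF Suc.prems(1) s Suc.prems(2)] .
  obtain X where X: "\<forall>i<d. \<forall>j<d. B i j - g i * cnj (g j) = (\<Sum>k\<in>{Suc s..<d}. cnj (X k i) * X k j)"
    using Suc.hyps(1)[of "Suc s", OF _ psd zero] Suc.hyps(2) by fastforce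
  have "B i j = (\<Sum>k\<in>{s..<d}. cnj ((X(s := \<lambda>i. cnj (g i))) k i) * (X(s := \<lambda>i. cnj (g i))) k j)"
    if "i < d" "j < d" for i j
    using X that s by (simp add: sum.atLeast_Suc_lessThan algebra_simps)
  then show ?case by blast
qed

lemma pos_semidef_adj_mult_factor:
  assumes "pos_semidef d B"
  obtains X where "\<forall>i<d. \<forall>j<d. B i j = adj_mult d X i j"
  using pos_semidef_adj_mult_factor_from[OF assms, of 0]
  unfolding adj_mult_def by (auto simp: atLeast0LessThan)

lemma pos_semidef_outer_factor:
  assumes "pos_semidef d R"
  obtains w where "\<forall>I<d. \<forall>J<d. R I J = (\<Sum>k<d. w k I * cnj (w k J))"
proof -
  obtain X where "\<forall>I<d. \<forall>J<d. R I J = adj_mult d X I J"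
    using pos_semidef_adj_mult_factor[OF assms] by blast
  then show ?thesis
    using that[of "\<lambda>k I. cnj (X k I)"] unfolding adj_mult_def by simp
qed

section \<open>Traces against tensor products\<close>

lemma complex_cauchy_schwarz_sum:
  fixes a b :: "'a \<Rightarrow> complex"
  shows "(cmod (\<Sum>i\<in>S. cnj (a i) * b i))\<^sup>2 \<le> (\<Sum>i\<in>S. (cmod (a i))\<^sup>2) * (\<Sum>i\<in>S. (cmod (b i))\<^sup>2)"
proof -
  have "cmod (\<Sum>i\<in>S. cnj (a i) * b i) \<le> (\<Sum>i\<in>S. cmod (a i) * cmod (b i))"
    by (rule order_trans[OF norm_sum]) (simp add: norm_mult)
  then have "(cmod (\<Sum>i\<in>S. cnj (a i) * b i))\<^sup>2 \<le> (\<Sum>i\<in>S. cmod (a i) * cmod (b i))\<^sup>2"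
    by (simp add: power_mono)
  also have "\<dots> \<le> (\<Sum>i\<in>S. (cmod (a i))\<^sup>2) * (\<Sum>i\<in>S. (cmod (b i))\<^sup>2)"
    by (rule Cauchy_Schwarz_ineq_sum)
  finally show ?thesis .
qed

definition trace_mult :: "nat \<Rightarrow> (nat \<Rightarrow> nat \<Rightarrow> complex) \<Rightarrow> (nat \<Rightarrow> nat \<Rightarrow> complex) \<Rightarrow> complex" where
  "trace_mult D A R = (\<Sum>I<D. \<Sum>J<D. A I J * R J I)"

lemma trace_mult_outer:
  assumes "\<forall>I<D. \<forall>J<D. R I J = (\<Sum>k<K. w k I * cnj (w k J))"
  shows "trace_mult D A R = (\<Sum>k<K. \<Sum>I<D. cnj (w k I) * (\<Sum>J<D. A I J * w k J))"
  unfolding trace_mult_def using assms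
  by (simp add: sum_distrib_left sum_distrib_right sum.swap[where A = "{..<K}"] mult_ac)

lemma trace_outer:
  assumes "\<forall>I<D. \<forall>J<D. R I J = (\<Sum>k<K. w k I * cnj (w k J))"
  shows "(\<Sum>I<D. R I I) = of_real (\<Sum>k<K. \<Sum>I<D. (cmod (w k I))\<^sup>2)"
  using assms unfolding of_real_sum complex_norm_square by (simp add: sum.swap[where A = "{..<K}"])

lemma trace_mult_adj_mult_outer:
  assumes "\<forall>I<D. \<forall>J<D. R I J = (\<Sum>k<K. w k I * cnj (w k J))"
  shows "trace_mult D (adj_mult D' A) R = of_real (\<Sum>k<K. \<Sum>L<D'. (cmod (\<Sum>J<D. A L J * w k J))\<^sup>2)"
proof -
  have "trace_mult D (adj_mult D' A) R = (\<Sum>k<K. \<Sum>I<D. cnj (w k I) * (\<Sum>J<D. adj_mult D' A I J * w k J))"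
    by (rule trace_mult_outer[OF assms])
  also have "\<dots> = (\<Sum>k<K. qform D (adj_mult D' A) (w k))"
    unfolding qform_def by (simp add: sum_distrib_left mult.assoc)
  finally show ?thesis by (simp add: qform_adj_mult of_real_sum)
qed

lemma trace_mult_cauchy_schwarz:
  assumes "pos_semidef D R"
  shows "(cmod (trace_mult D A R))\<^sup>2 \<le> Re (\<Sum>I<D. R I I) * Re (trace_mult D (adj_mult D A) R)"
proof -
  obtain w where w: "\<forall>I<D. \<forall>J<D. R I J = (\<Sum>k<D. w k I * cnj (w k J))"
    using pos_semidef_outer_factor[OF assms] by blast
  define v where "v k L = (\<Sum>J<D. A L J * w k J)" for k L
  have "trace_mult D A R = (\<Sum>k<D. \<Sum>I<D. cnj (w k I) * v k I)"
    unfolding v_def by (rule trace_mult_outer[OF w])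
  then have "(cmod (trace_mult D A R))\<^sup>2 \<le>
      (\<Sum>(k, I)\<in>{..<D} \<times> {..<D}. (cmod (w k I))\<^sup>2) * (\<Sum>(k, I)\<in>{..<D} \<times> {..<D}. (cmod (v k I))\<^sup>2)"
    using complex_cauchy_schwarz_sum[of "\<lambda>(k, I). w k I" "\<lambda>(k, I). v k I" "{..<D} \<times> {..<D}"]
    by (simp add: sum.cartesian_product case_prod_unfold)
  also have "\<dots> = Re (\<Sum>I<D. R I I) * Re (trace_mult D (adj_mult D A) R)"
    using trace_outer[OF w] trace_mult_adj_mult_outer[OF w]
    by (simp add: v_def sum.cartesian_product)
  finally show ?thesis .
qed

lemma sum_lessThan_mult_div_mod:
  fixes n m :: nat
  shows "(\<Sum>I<n * m. f (I div m) (I mod m)) = (\<Sum>a<n. \<Sum>b<m. f a b)"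
proof (induction n)
  case 0
  then show ?case by simp
next
  case (Suc n)
  have "{..<Suc n * m} = {..<n * m} \<union> {n * m..<n * m + m}" by auto
  then have "(\<Sum>I<Suc n * m. f (I div m) (I mod m)) =
      (\<Sum>I<n * m. f (I div m) (I mod m)) + (\<Sum>I\<in>{n * m..<n * m + m}. f (I div m) (I mod m))"
    by (simp add: sum.union_disjoint ivl_disj_int)
  also have "(\<Sum>I\<in>{n * m..<n * m + m}. f (I div m) (I mod m)) = (\<Sum>b<m. f n b)"
    using sum.shift_bounds_nat_ivl[of "\<lambda>I. f (I div m) (I mod m)" 0 "n * m" m]
    by (simp add: add.commute lessThan_atLeast0)
  finally show ?case using Suc by simp
qed

lemma div_mod_less_of_less_mult:
  fixes I n m :: nat
  assumes "I < n * m"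
  shows "I div m < n" "I mod m < m"
  using assms by (auto simp: less_mult_imp_div_less) (metis mod_less_divisor mult_0_right nat_neq_iff not_less_zero)

definition kron_fun :: "nat \<Rightarrow> (nat \<Rightarrow> nat \<Rightarrow> complex) \<Rightarrow> (nat \<Rightarrow> nat \<Rightarrow> complex) \<Rightarrow> nat \<Rightarrow> nat \<Rightarrow> complex" where
  "kron_fun m X Y I J = X (I div m) (J div m) * Y (I mod m) (J mod m)"

lemma adj_mult_kron_fun:
  fixes n m :: nat
  shows "adj_mult (n * m) (kron_fun m X Y) = kron_fun m (adj_mult n X) (adj_mult m Y)"
proof (intro ext)
  fix I J
  have "adj_mult (n * m) (kron_fun m X Y) I J = (\<Sum>L<n * m.
      cnj (X (L div m) (I div m) * Y (L mod m) (I mod m)) * (X (L div m) (J div m) * Y (L mod m) (J mod m)))"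
    by (simp add: adj_mult_def kron_fun_def)
  also have "\<dots> = (\<Sum>a<n. \<Sum>b<m. cnj (X a (I div m) * Y b (I mod m)) * (X a (J div m) * Y b (J mod m)))"
    by (rule sum_lessThan_mult_div_mod)
  also have "\<dots> = kron_fun m (adj_mult n X) (adj_mult m Y) I J"
    by (simp add: adj_mult_def kron_fun_def sum_product mult_ac)
  finally show "adj_mult (n * m) (kron_fun m X Y) I J = kron_fun m (adj_mult n X) (adj_mult m Y) I J" .
qed

abbreviation tensor_trace ::
    "nat \<Rightarrow> nat \<Rightarrow> (nat \<Rightarrow> nat \<Rightarrow> complex) \<Rightarrow> (nat \<Rightarrow> nat \<Rightarrow> complex) \<Rightarrow> (nat \<Rightarrow> nat \<Rightarrow> complex) \<Rightarrow> complex" where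
  "tensor_trace n m R X Y \<equiv> trace_mult (n * m) (kron_fun m X Y) R"

lemma mtrace_kron_mult:
  assumes "X \<in> carrier_mat n n" "Y \<in> carrier_mat m m" "R \<in> carrier_mat (n * m) (n * m)"
  shows "mtrace (kron X Y * R) = tensor_trace n m (entries R) (entries X) (entries Y)"
  using assms div_mod_less_of_less_mult[of _ n m] unfolding mtrace_def trace_mult_def kron_fun_def kron_def
  by (auto simp: scalar_prod_def lessThan_atLeast0 intro!: sum.cong)

lemma tensor_trace_cong:
  assumes "\<forall>i<n. \<forall>j<n. X i j = X' i j" "\<forall>i<m. \<forall>j<m. Y i j = Y' i j"
  shows "tensor_trace n m R X Y = tensor_trace n m R X' Y'"
  unfolding trace_mult_def kron_fun_def using assms div_mod_less_of_less_mult[of _ n m]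
  by (auto intro!: sum.cong)

lemma tensor_trace_sum_left:
  "tensor_trace n m R (\<lambda>i j. \<Sum>s\<in>S. X s i j) Y = (\<Sum>s\<in>S. tensor_trace n m R (X s) Y)"
  unfolding trace_mult_def kron_fun_def
  by (simp add: sum_distrib_right sum.swap[where A = S])

lemma tensor_trace_sum_right:
  "tensor_trace n m R X (\<lambda>i j. \<Sum>s\<in>S. Y s i j) = (\<Sum>s\<in>S. tensor_trace n m R X (Y s))"
  unfolding trace_mult_def kron_fun_def
  by (simp add: sum_distrib_left sum_distrib_right sum.swap[where A = S])

lemma tensor_trace_scale_left: "tensor_trace n m R (\<lambda>i j. c * X i j) Y = c * tensor_trace n m R X Y"
  unfolding trace_mult_def kron_fun_def by (simp add: sum_distrib_left mult_ac)

lemma tensor_trace_scale_right: "tensor_trace n m R X (\<lambda>i j. c * Y i j) = c * tensor_trace n m R X Y"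
  unfolding trace_mult_def kron_fun_def by (simp add: sum_distrib_left mult_ac)

lemma tensor_trace_add_left:
  "tensor_trace n m R (\<lambda>i j. X i j + X' i j) Y = tensor_trace n m R X Y + tensor_trace n m R X' Y"
  unfolding trace_mult_def kron_fun_def by (simp add: sum.distrib algebra_simps)

lemma tensor_trace_add_right:
  "tensor_trace n m R X (\<lambda>i j. Y i j + Y' i j) = tensor_trace n m R X Y + tensor_trace n m R X Y'"
  unfolding trace_mult_def kron_fun_def by (simp add: sum.distrib algebra_simps)

lemma tensor_trace_kdelta: "tensor_trace n m R kdelta kdelta = (\<Sum>I<n * m. R I I)"
proof -
  have "(I div m = J div m \<and> I mod m = J mod m) \<longleftrightarrow> I = J" for I J :: nat
    by (metis div_mult_mod_eq)
  then have "kron_fun m kdelta kdelta = kdelta"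
    unfolding kron_fun_def by (intro ext) auto
  then show ?thesis
    unfolding trace_mult_def by (simp add: if_zero_simps sum.delta)
qed

lemma tensor_trace_nonneg:
  assumes R: "pos_semidef (n * m) R" and X: "pos_semidef n X" and Y: "pos_semidef m Y"
  shows "tensor_trace n m R X Y \<in> \<real>" "0 \<le> Re (tensor_trace n m R X Y)"
proof -
  obtain X' where X': "\<forall>i<n. \<forall>j<n. X i j = adj_mult n X' i j"
    using pos_semidef_adj_mult_factor[OF X] by blast
  obtain Y' where Y': "\<forall>i<m. \<forall>j<m. Y i j = adj_mult m Y' i j"
    using pos_semidef_adj_mult_factor[OF Y] by blast
  obtain w where w: "\<forall>I<n * m. \<forall>J<n * m. R I J = (\<Sum>k<n * m. w k I * cnj (w k J))"
    using pos_semidef_outer_factor[OF R] by blast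
  have "tensor_trace n m R X Y = trace_mult (n * m) (adj_mult (n * m) (kron_fun m X' Y')) R"
    unfolding adj_mult_kron_fun by (rule tensor_trace_cong[OF X' Y'])
  also have "\<dots> = of_real (\<Sum>k<n * m. \<Sum>L<n * m. (cmod (\<Sum>J<n * m. kron_fun m X' Y' L J * w k J))\<^sup>2)"
    by (rule trace_mult_adj_mult_outer[OF w])
  finally show "tensor_trace n m R X Y \<in> \<real>" "0 \<le> Re (tensor_trace n m R X Y)"
    by (auto intro!: sum_nonneg)
qed

lemma tensor_trace_cauchy_schwarz:
  assumes "pos_semidef (n * m) R"
  shows "(cmod (tensor_trace n m R X Y))\<^sup>2 \<le>
    Re (\<Sum>I<n * m. R I I) * Re (tensor_trace n m R (adj_mult n X) (adj_mult m Y))"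
  using trace_mult_cauchy_schwarz[OF assms, of "kron_fun m X Y"] by (simp only: adj_mult_kron_fun)

lemma tensor_trace_mono:
  assumes R: "pos_semidef (n * m) R"
    and X: "pos_semidef n X" "pos_semidef n E" and Y: "pos_semidef m Y" "pos_semidef m F"
  shows "Re (tensor_trace n m R X Y) \<le> Re (tensor_trace n m R (\<lambda>i j. X i j + E i j) (\<lambda>i j. Y i j + F i j))"
proof -
  have "tensor_trace n m R (\<lambda>i j. X i j + E i j) (\<lambda>i j. Y i j + F i j) =
      tensor_trace n m R X Y + tensor_trace n m R X F + tensor_trace n m R E (\<lambda>i j. Y i j + F i j)"
    by (simp only: tensor_trace_add_left tensor_trace_add_right add.assoc)
  moreover have "0 \<le> Re (tensor_trace n m R X F)" "0 \<le> Re (tensor_trace n m R E (\<lambda>i j. Y i j + F i j))"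
    using tensor_trace_nonneg(2)[OF R] X Y pos_semidef_add by blast+
  ultimately show ?thesis by simp
qed

section \<open>Unimodular combinations of measurement operators\<close>

lemma sum_norm_povm_factors:
  assumes G: "\<forall>a<q. \<forall>i<d. \<forall>j<d. P a i j = adj_mult d (G a) i j"
    and sum_id: "\<forall>i<d. \<forall>j<d. (\<Sum>a<q. P a i j) = kdelta i j"
  shows "(\<Sum>(a, \<kappa>)\<in>{..<q} \<times> {..<d}. (cmod (\<Sum>j<d. G a \<kappa> j * g j))\<^sup>2) = (\<Sum>j<d. (cmod (g j))\<^sup>2)"
proof -
  have "of_real (\<Sum>(a, \<kappa>)\<in>{..<q} \<times> {..<d}. (cmod (\<Sum>j<d. G a \<kappa> j * g j))\<^sup>2) =
      (\<Sum>a<q. qform d (adj_mult d (G a)) g)"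
    unfolding qform_adj_mult sum.cartesian_product[symmetric] of_real_sum ..
  also have "\<dots> = (\<Sum>a<q. qform d (P a) g)"
    using G by (intro sum.cong refl qform_cong) auto
  also have "\<dots> = qform d kdelta g"
    unfolding qform_sum[symmetric] using sum_id by (intro qform_cong) auto
  finally show ?thesis unfolding qform_kdelta of_real_eq_iff .
qed

lemma povm_combination_sesq:
  assumes G: "\<forall>a<q. \<forall>i<d. \<forall>j<d. P a i j = adj_mult d (G a) i j"
  shows "(\<Sum>k<d. cnj (u k) * (\<Sum>j<d. (\<Sum>a<q. c a * P a k j) * f j)) =
    (\<Sum>(a, \<kappa>)\<in>{..<q} \<times> {..<d}. cnj (cnj (c a) * (\<Sum>j<d. G a \<kappa> j * u j)) * (\<Sum>j<d. G a \<kappa> j * f j))"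
proof -
  define Gv where "Gv a g \<kappa> = (\<Sum>j<d. G a \<kappa> j * g j)" for a g \<kappa>
  have sesq: "(\<Sum>k<d. \<Sum>j<d. cnj (u k) * P a k j * f j) = (\<Sum>\<kappa><d. cnj (Gv a u \<kappa>) * Gv a f \<kappa>)"
    if "a < q" for a
    unfolding Gv_def sesq_adj_mult[symmetric] using G that by (auto intro!: sum.cong)
  have "(\<Sum>k<d. cnj (u k) * (\<Sum>j<d. (\<Sum>a<q. c a * P a k j) * f j)) =
      (\<Sum>a<q. c a * (\<Sum>k<d. \<Sum>j<d. cnj (u k) * P a k j * f j))"
    by (simp add: sum_distrib_left sum_distrib_right sum.swap[where A = "{..<q}"] mult_ac)
  also have "\<dots> = (\<Sum>a<q. c a * (\<Sum>\<kappa><d. cnj (Gv a u \<kappa>) * Gv a f \<kappa>))"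
    by (intro sum.cong refl) (simp add: sesq)
  also have "\<dots> = (\<Sum>(a, \<kappa>)\<in>{..<q} \<times> {..<d}. cnj (cnj (c a) * Gv a u \<kappa>) * Gv a f \<kappa>)"
    by (simp add: sum.cartesian_product[symmetric] sum_distrib_left mult.assoc)
  finally show ?thesis unfolding Gv_def .
qed

text \<open>With \<open>P\<^sub>a = G\<^sub>a\<^sup>* G\<^sub>a\<close> and \<open>h = (\<Sum>\<^sub>a c\<^sub>a P\<^sub>a) f\<close> one has
  \<open>\<parallel>h\<parallel>\<^sup>2 = \<Sum>\<^sub>a c\<^sub>a \<langle>G\<^sub>a h, G\<^sub>a f\<rangle>\<close>, while \<open>\<Sum>\<^sub>a \<parallel>G\<^sub>a g\<parallel>\<^sup>2 = \<parallel>g\<parallel>\<^sup>2\<close> for every \<open>g\<close>;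
  Cauchy-Schwarz then gives \<open>\<parallel>h\<parallel>\<^sup>2 \<le> \<parallel>h\<parallel> \<parallel>f\<parallel>\<close>.\<close>
lemma povm_combination_norm_le:
  fixes P :: "nat \<Rightarrow> nat \<Rightarrow> nat \<Rightarrow> complex"
  assumes psd: "\<forall>a<q. pos_semidef d (P a)"
    and sum_id: "\<forall>i<d. \<forall>j<d. (\<Sum>a<q. P a i j) = kdelta i j"
    and unimodular: "\<forall>a<q. cmod (c a) = 1"
  shows "(\<Sum>k<d. (cmod (\<Sum>j<d. (\<Sum>a<q. c a * P a k j) * f j))\<^sup>2) \<le> (\<Sum>j<d. (cmod (f j))\<^sup>2)"
proof -
  have "\<exists>G. \<forall>i<d. \<forall>j<d. P a i j = adj_mult d G i j" if "a < q" for a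
    using pos_semidef_adj_mult_factor[OF psd[rule_format, OF that]] by blast
  then obtain G where G: "\<forall>a<q. \<forall>i<d. \<forall>j<d. P a i j = adj_mult d (G a) i j"
    by metis
  define Gv where "Gv a g \<kappa> = (\<Sum>j<d. G a \<kappa> j * g j)" for a g \<kappa>
  define h where "h k = (\<Sum>j<d. (\<Sum>a<q. c a * P a k j) * f j)" for k
  define H where "H = (\<Sum>k<d. (cmod (h k))\<^sup>2)"
  define F where "F = (\<Sum>j<d. (cmod (f j))\<^sup>2)"
  let ?N = "{..<q} \<times> {..<d}"
  have "of_real H = (\<Sum>k<d. cnj (h k) * (\<Sum>j<d. (\<Sum>a<q. c a * P a k j) * f j))"
    unfolding H_def of_real_sum complex_norm_square h_def by (simp add: mult.commute)
  also have "\<dots> = (\<Sum>(a, \<kappa>)\<in>?N. cnj (cnj (c a) * Gv a h \<kappa>) * Gv a f \<kappa>)"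
    unfolding Gv_def by (rule povm_combination_sesq[OF G])
  finally have H: "of_real H = (\<Sum>(a, \<kappa>)\<in>?N. cnj (cnj (c a) * Gv a h \<kappa>) * Gv a f \<kappa>)" .
  have "H\<^sup>2 = (cmod (of_real H))\<^sup>2" by simp
  also have "\<dots> \<le>
      (\<Sum>(a, \<kappa>)\<in>?N. (cmod (cnj (c a) * Gv a h \<kappa>))\<^sup>2) * (\<Sum>(a, \<kappa>)\<in>?N. (cmod (Gv a f \<kappa>))\<^sup>2)"
    unfolding H using complex_cauchy_schwarz_sum[of "\<lambda>(a, \<kappa>). cnj (c a) * Gv a h \<kappa>" "\<lambda>(a, \<kappa>). Gv a f \<kappa>" ?N]
    by (simp add: case_prod_unfold)
  also have "(\<Sum>(a, \<kappa>)\<in>?N. (cmod (cnj (c a) * Gv a h \<kappa>))\<^sup>2) = (\<Sum>(a, \<kappa>)\<in>?N. (cmod (Gv a h \<kappa>))\<^sup>2)"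
    using unimodular by (intro sum.cong) (auto simp: norm_mult)
  finally have "H * H \<le> H * F"
    unfolding Gv_def sum_norm_povm_factors[OF G sum_id] H_def F_def by (simp add: power2_eq_square)
  moreover have "0 \<le> H" unfolding H_def by (simp add: sum_nonneg)
  ultimately have "H \<le> F"
    by (cases "H = 0") (auto simp: F_def sum_nonneg mult_le_cancel_left)
  then show ?thesis unfolding H_def F_def h_def .
qed

section \<open>Characters of \<open>F\<^sub>p\<^sup>l\<close>\<close>

definition unit_root :: "nat \<Rightarrow> complex" where
  "unit_root p = cis (2 * pi / real p)"

lemma norm_unit_root [simp]: "cmod (unit_root p) = 1"
  unfolding unit_root_def by simp

lemma unit_root_pow: "unit_root p ^ k = cis (2 * pi * real k / real p)"
  unfolding unit_root_def DeMoivre by (simp add: mult_ac)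

lemma unit_root_pow_mod:
  assumes "p > 0"
  shows "unit_root p ^ (k mod p) = unit_root p ^ k"
proof -
  have "unit_root p ^ p = 1" using assms by (simp add: unit_root_pow)
  then show ?thesis
    by (metis div_mult_mod_eq power_add power_mult power_one mult.commute mult_1)
qed

lemma unit_root_pow_eq_1_iff:
  assumes "p > 0"
  shows "unit_root p ^ k = 1 \<longleftrightarrow> p dvd k"
proof -
  have "unit_root p ^ k = 1 \<longleftrightarrow> unit_root p ^ (k mod p) = unit_root p ^ 0"
    by (simp add: unit_root_pow_mod[OF assms])
  also have "\<dots> \<longleftrightarrow> k mod p = 0"
    using bij_betw_imp_inj_on[OF bij_betw_roots_unity[OF assms]] assms
    unfolding unit_root_pow inj_on_def by auto
  finally show ?thesis by (simp add: dvd_eq_mod_eq_0)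
qed

lemma cnj_unit_root_pow:
  assumes "p > 0"
  shows "cnj (unit_root p) ^ k = unit_root p ^ ((p - 1) * k)"
proof -
  have "unit_root p ^ (p - 1) * unit_root p = 1"
    using unit_root_pow_eq_1_iff[OF assms, of p] assms by (simp flip: power_Suc2)
  moreover have "unit_root p * cnj (unit_root p) = 1"
    using complex_norm_square[of "unit_root p"] by simp
  ultimately have "cnj (unit_root p) = unit_root p ^ (p - 1)"
    by (metis mult.assoc mult.commute mult_1)
  then show ?thesis by (simp add: power_mult)
qed

lemma sum_unit_root_pow:
  assumes "p > 0"
  shows "(\<Sum>t<p. unit_root p ^ (t * k)) = (if p dvd k then of_nat p else 0)"
proof (cases "p dvd k")
  case True
  then have "unit_root p ^ k = 1" using unit_root_pow_eq_1_iff[OF assms] by simp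
  then have "unit_root p ^ (t * k) = 1" for t
    by (metis power_mult mult.commute power_one)
  then show ?thesis using True by simp
next
  case False
  then have z: "unit_root p ^ k \<noteq> 1" using unit_root_pow_eq_1_iff[OF assms] by simp
  have "(\<Sum>t<p. unit_root p ^ (t * k)) = (\<Sum>t<p. (unit_root p ^ k) ^ t)"
    by (simp only: power_mult[symmetric] mult.commute)
  also have "\<dots> = ((unit_root p ^ k) ^ p - 1) / (unit_root p ^ k - 1)"
    using geometric_sum[OF z] .
  also have "(unit_root p ^ k) ^ p = 1"
    using unit_root_pow_eq_1_iff[OF assms, of "k * p"] by (simp add: power_mult)
  finally show ?thesis using False by simp
qed

text \<open>Here \<open>(p - 1) * s\<close> stands for \<open>-s\<close> modulo \<open>p\<close>, as in \<open>cnj \<omega> = \<omega> ^ (p - 1)\<close>.\<close>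
lemma dvd_add_mult_pred_iff:
  fixes p a s :: nat
  assumes "p > 0"
  shows "p dvd a + (p - 1) * s \<longleftrightarrow> a mod p = s mod p"
proof -
  have "p dvd a + (p - 1) * s \<longleftrightarrow> (a + (p - 1) * s + s) mod p = s mod p"
    using mod_eq_dvd_iff_nat[of s "a + (p - 1) * s + s" p] by simp
  also have "a + (p - 1) * s + s = a + p * s" using assms by (cases p) auto
  finally show ?thesis by simp
qed

lemma prime_dvd_mult_add_mult_pred_iff:
  fixes p t b b' :: nat
  assumes "prime p" "0 < t" "t < p" "b < p" "b' < p"
  shows "p dvd t * (b + (p - 1) * b') \<longleftrightarrow> b = b'"
proof -
  have "\<not> p dvd t" using assms by (auto dest: dvd_imp_le)
  then have "p dvd t * (b + (p - 1) * b') \<longleftrightarrow> p dvd b + (p - 1) * b'"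
    using assms(1) by (simp add: prime_dvd_mult_iff)
  also have "\<dots> \<longleftrightarrow> b = b'"
    using dvd_add_mult_pred_iff[of p b b'] assms by (simp add: prime_gt_0_nat)
  finally show ?thesis .
qed

lemma Fpl_0: "Fpl p 0 = {[]}"
  unfolding Fpl_def by auto

lemma Fpl_Suc: "Fpl p (Suc l) = (\<lambda>(a, x). a # x) ` ({..<p} \<times> Fpl p l)"
proof (intro equalityI subsetI)
  fix y assume "y \<in> Fpl p (Suc l)"
  then obtain a x where "y = a # x" "a < p" "x \<in> Fpl p l"
    unfolding Fpl_def by (cases y) auto
  then show "y \<in> (\<lambda>(a, x). a # x) ` ({..<p} \<times> Fpl p l)" by force
qed (auto simp: Fpl_def)

lemma inj_on_Cons_pair: "inj_on (\<lambda>(a, x). a # x) S"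
  by (auto simp: inj_on_def)

lemma finite_Fpl [simp]: "finite (Fpl p l)"
  by (induction l) (auto simp: Fpl_0 Fpl_Suc)

lemma card_Fpl: "card (Fpl p l) = p ^ l"
  by (induction l) (auto simp: Fpl_0 Fpl_Suc card_image[OF inj_on_Cons_pair] card_cartesian_product)

lemma sum_Fpl_Suc: "(\<Sum>y\<in>Fpl p (Suc l). F y) = (\<Sum>a<p. \<Sum>x\<in>Fpl p l. F (a # x))"
  unfolding Fpl_Suc sum.reindex[OF inj_on_Cons_pair] by (simp add: sum.cartesian_product case_prod_unfold)

lemma replicate_zero_in_Fpl: "p > 0 \<Longrightarrow> replicate l 0 \<in> Fpl p l"
  unfolding Fpl_def by auto

lemma dotp_less: "p > 0 \<Longrightarrow> dotp p x r < p"
  unfolding dotp_def by simp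

lemma dotp_Cons: "dotp p (a # x) (b # r) = (a * b + dotp p x r) mod p"
  unfolding dotp_def length_Cons sum.lessThan_Suc_shift by (simp add: mod_add_right_eq)

lemma unit_root_pow_mult_mod:
  assumes "p > 0"
  shows "unit_root p ^ (t * (n mod p)) = unit_root p ^ (t * n)"
  by (metis assms mod_mult_right_eq unit_root_pow_mod)

lemma unit_root_character_Cons:
  assumes "p > 0"
  shows "unit_root p ^ (t * dotp p (a # x) (b # s)) * cnj (unit_root p) ^ (t * dotp p (a # x) (b' # s')) =
    unit_root p ^ (a * (t * (b + (p - 1) * b'))) *
    (unit_root p ^ (t * dotp p x s) * cnj (unit_root p) ^ (t * dotp p x s'))"
proof -
  have "t * (a * b + dotp p x s) + (p - 1) * t * (a * b' + dotp p x s') =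
      a * (t * (b + (p - 1) * b')) + (t * dotp p x s + (p - 1) * t * dotp p x s')"
    by (simp add: algebra_simps)
  then show ?thesis
    unfolding cnj_unit_root_pow[OF assms] dotp_Cons
    by (simp add: unit_root_pow_mult_mod[OF assms] mult.assoc[symmetric] power_add[symmetric])
qed

lemma sum_Fpl_character_orthogonal:
  assumes p: "prime p" and t: "0 < t" "t < p"
  shows "r \<in> Fpl p l \<Longrightarrow> r' \<in> Fpl p l \<Longrightarrow>
    (\<Sum>x\<in>Fpl p l. unit_root p ^ (t * dotp p x r) * cnj (unit_root p) ^ (t * dotp p x r')) =
    (if r = r' then of_nat (p ^ l) else 0)"
proof (induction l arbitrary: r r')
  case 0
  then show ?case by (simp add: Fpl_0 dotp_def)
next
  case (Suc l)
  have p0: "p > 0" using p prime_gt_0_nat by blast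
  obtain b s where r: "r = b # s" "b < p" "s \<in> Fpl p l"
    using Suc.prems(1) unfolding Fpl_def by (cases r) auto
  obtain b' s' where r': "r' = b' # s'" "b' < p" "s' \<in> Fpl p l"
    using Suc.prems(2) unfolding Fpl_def by (cases r') auto
  have "(\<Sum>y\<in>Fpl p (Suc l). unit_root p ^ (t * dotp p y r) * cnj (unit_root p) ^ (t * dotp p y r')) =
      (\<Sum>a<p. unit_root p ^ (a * (t * (b + (p - 1) * b')))) *
      (\<Sum>x\<in>Fpl p l. unit_root p ^ (t * dotp p x s) * cnj (unit_root p) ^ (t * dotp p x s'))"
    unfolding sum_Fpl_Suc r(1) r'(1) unit_root_character_Cons[OF p0] by (rule sum_product[symmetric])
  also have "(\<Sum>a<p. unit_root p ^ (a * (t * (b + (p - 1) * b')))) = (if b = b' then of_nat p else 0)"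
    using sum_unit_root_pow[OF p0] prime_dvd_mult_add_mult_pred_iff[OF p t r(2) r'(2)] by simp
  finally show ?case using Suc.IH[OF r(3) r'(3)] r r' by auto
qed

lemma win_event_iff:
  assumes p: "p > 0" and ab: "a < p" "b < p"
  shows "win_event p xB xC rB rC a b \<longleftrightarrow> (a + b) mod p = (dotp p xB rB + dotp p xC rC) mod p"
proof
  assume "win_event p xB xC rB rC a b"
  then obtain j k where jk: "(j + k) mod p = 0"
    "a = (dotp p xB rB + j) mod p" "b = (dotp p xC rC + k) mod p"
    unfolding win_event_def by (elim exE conjE) (simp only:)
  have "(a + b) mod p = (dotp p xB rB + dotp p xC rC + (j + k)) mod p"
    unfolding jk(2,3) by (simp add: mod_add_eq add_ac)
  also have "\<dots> = (dotp p xB rB + dotp p xC rC) mod p"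
    using jk(1) by (metis add_0_right mod_add_right_eq)
  finally show "(a + b) mod p = (dotp p xB rB + dotp p xC rC) mod p" .
next
  assume h: "(a + b) mod p = (dotp p xB rB + dotp p xC rC) mod p"
  define dB dC where "dB = dotp p xB rB" and "dC = dotp p xC rC"
  have d: "dB < p" "dC < p" unfolding dB_def dC_def using dotp_less[OF p] by auto
  define j k where "j = (a + (p - dB)) mod p" and "k = (b + (p - dC)) mod p"
  have a_eq: "a = (dB + j) mod p" and b_eq: "b = (dC + k) mod p"
    unfolding j_def k_def using d ab by (simp_all add: mod_add_right_eq)
  have jk: "(j + k) mod p = 0"
  proof -
    have "(j + k) mod p = ((a + (p - dB)) + (b + (p - dC))) mod p"
      unfolding j_def k_def by (simp add: mod_add_eq)
    also have "(a + (p - dB)) + (b + (p - dC)) = a + b + 2 * p - (dB + dC)"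
      using d by simp
    also have "(a + b + 2 * p - (dB + dC)) mod p = 0"
    proof -
      have "(a + b + 2 * p) mod p = (dB + dC) mod p" using h unfolding dB_def dC_def by simp
      then have "p dvd a + b + 2 * p - (dB + dC)"
        using mod_eq_dvd_iff_nat[of "dB + dC" "a + b + 2 * p" p] d by simp
      then show ?thesis by (rule dvd_imp_mod_0)
    qed
    finally show ?thesis .
  qed
  have "j < p" "k < p" unfolding j_def k_def using p by simp_all
  with jk a_eq b_eq show "win_event p xB xC rB rC a b"
    unfolding win_event_def dB_def[symmetric] dC_def[symmetric] by metis
qed

lemma sum_unit_root_win_event:
  assumes p: "p > 0" and ab: "a < p" "b < p"
  shows "(\<Sum>t<p. unit_root p ^ (t * a) * cnj (unit_root p) ^ (t * dotp p xB rB) *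
      (unit_root p ^ (t * b) * cnj (unit_root p) ^ (t * dotp p xC rC))) =
    (if win_event p xB xC rB rC a b then of_nat p else 0)"
proof -
  define K where "K = a + b + (p - 1) * (dotp p xB rB + dotp p xC rC)"
  have "t * K = t * a + (p - 1) * (t * dotp p xB rB) + (t * b + (p - 1) * (t * dotp p xC rC))" for t
    unfolding K_def by (simp add: algebra_simps)
  then have "(\<Sum>t<p. unit_root p ^ (t * a) * cnj (unit_root p) ^ (t * dotp p xB rB) *
      (unit_root p ^ (t * b) * cnj (unit_root p) ^ (t * dotp p xC rC))) = (\<Sum>t<p. unit_root p ^ (t * K))"
    unfolding cnj_unit_root_pow[OF p] by (simp add: power_add)
  also have "\<dots> = (if win_event p xB xC rB rC a b then of_nat p else 0)"
    unfolding sum_unit_root_pow[OF p] K_def dvd_add_mult_pred_iff[OF p] win_event_iff[OF p ab] ..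
  finally show ?thesis .
qed

section \<open>Fourier transforms of measurement strategies\<close>

lemma is_povm_psd: "is_povm d S M \<Longrightarrow> x \<in> S \<Longrightarrow> psd d (M x)"
  unfolding is_povm_def by blast

lemma is_povm_carrier: "is_povm d S M \<Longrightarrow> x \<in> S \<Longrightarrow> M x \<in> carrier_mat d d"
  unfolding is_povm_def psd_def by blast

lemma is_povm_pos_semidef: "is_povm d S M \<Longrightarrow> x \<in> S \<Longrightarrow> pos_semidef d (entries (M x))"
  by (metis is_povm_psd psd_iff_pos_semidef)

lemma is_povm_sum: "is_povm d S M \<Longrightarrow> \<forall>i<d. \<forall>j<d. (\<Sum>x\<in>S. M x $$ (i, j)) = kdelta i j"
  unfolding is_povm_def by blast

definition observable :: "nat \<Rightarrow> nat \<Rightarrow> (nat \<Rightarrow> complex mat) \<Rightarrow> nat \<Rightarrow> nat \<Rightarrow> complex" where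
  "observable p t M i j = (\<Sum>a<p. unit_root p ^ (t * a) * M a $$ (i, j))"

definition fourier :: "nat \<Rightarrow> nat \<Rightarrow> nat \<Rightarrow> (nat list \<Rightarrow> nat \<Rightarrow> nat \<Rightarrow> complex) \<Rightarrow> nat list \<Rightarrow> nat \<Rightarrow> nat \<Rightarrow> complex" where
  "fourier p l t F x i j = (\<Sum>r\<in>Fpl p l. cnj (unit_root p) ^ (t * dotp p x r) * F r i j) / of_nat (p ^ l)"

lemma qform_adj_mult_observable_le:
  assumes "is_povm d {..<p} M"
  shows "Re (qform d (adj_mult d (observable p t M)) f) \<le> (\<Sum>j<d. (cmod (f j))\<^sup>2)"
proof -
  have "(\<Sum>k<d. (cmod (\<Sum>j<d. (\<Sum>a<p. unit_root p ^ (t * a) * M a $$ (k, j)) * f j))\<^sup>2)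
      \<le> (\<Sum>j<d. (cmod (f j))\<^sup>2)"
    by (rule povm_combination_norm_le)
      (simp_all add: is_povm_pos_semidef[OF assms] is_povm_sum[OF assms] norm_power)
  then show ?thesis unfolding qform_adj_mult observable_def by simp
qed

lemma sum_Fpl_fourier_parseval:
  assumes p: "prime p" and t: "0 < t" "t < p"
  shows "(\<Sum>x\<in>Fpl p l. cnj (\<Sum>r\<in>Fpl p l. cnj (unit_root p) ^ (t * dotp p x r) * g r) *
      (\<Sum>r\<in>Fpl p l. cnj (unit_root p) ^ (t * dotp p x r) * h r)) =
    of_nat (p ^ l) * (\<Sum>r\<in>Fpl p l. cnj (g r) * h r)"
proof -
  let ?F = "Fpl p l" and ?\<omega> = "unit_root p"
  have "(\<Sum>x\<in>?F. cnj (\<Sum>r\<in>?F. cnj ?\<omega> ^ (t * dotp p x r) * g r) * (\<Sum>r\<in>?F. cnj ?\<omega> ^ (t * dotp p x r) * h r)) =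
      (\<Sum>x\<in>?F. \<Sum>r'\<in>?F. \<Sum>r\<in>?F. ?\<omega> ^ (t * dotp p x r) * cnj ?\<omega> ^ (t * dotp p x r') * (cnj (g r) * h r'))"
    by (simp add: sum_product mult_ac)
  also have "\<dots> = (\<Sum>r'\<in>?F. \<Sum>x\<in>?F. \<Sum>r\<in>?F. ?\<omega> ^ (t * dotp p x r) * cnj ?\<omega> ^ (t * dotp p x r') * (cnj (g r) * h r'))"
    by (rule sum.swap)
  also have "\<dots> = (\<Sum>r'\<in>?F. \<Sum>r\<in>?F. (\<Sum>x\<in>?F. ?\<omega> ^ (t * dotp p x r) * cnj ?\<omega> ^ (t * dotp p x r')) * (cnj (g r) * h r'))"
    by (rule sum.cong[OF refl], subst sum.swap) (simp add: sum_distrib_right)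
  also have "\<dots> = (\<Sum>r'\<in>?F. \<Sum>r\<in>?F. (if r = r' then of_nat (p ^ l) else 0) * (cnj (g r) * h r'))"
    by (simp add: sum_Fpl_character_orthogonal[OF p t])
  also have "\<dots> = of_nat (p ^ l) * (\<Sum>r\<in>?F. cnj (g r) * h r)"
    by (simp add: if_zero_simps sum.delta' sum_distrib_left)
  finally show ?thesis .
qed

lemma sum_adj_mult_fourier:
  assumes p: "prime p" and t: "0 < t" "t < p"
  shows "(\<Sum>x\<in>Fpl p l. adj_mult d (fourier p l t F x) i j) =
    (\<Sum>r\<in>Fpl p l. adj_mult d (F r) i j) / of_nat (p ^ l)"
proof -
  let ?F = "Fpl p l" and ?N = "of_nat (p ^ l) :: complex"
  define S where "S x k i = (\<Sum>r\<in>?F. cnj (unit_root p) ^ (t * dotp p x r) * F r k i)" for x k i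
  have p0: "p > 0" using p prime_gt_0_nat by blast
  have "(\<Sum>x\<in>?F. adj_mult d (fourier p l t F x) i j) =
      (\<Sum>k<d. \<Sum>x\<in>?F. cnj (fourier p l t F x k i) * fourier p l t F x k j)"
    unfolding adj_mult_def by (rule sum.swap)
  also have "\<dots> = (\<Sum>k<d. (\<Sum>x\<in>?F. cnj (S x k i) * S x k j) / (?N * ?N))"
    unfolding fourier_def S_def[symmetric] by (simp add: sum_divide_distrib)
  also have "\<dots> = (\<Sum>k<d. (\<Sum>r\<in>?F. cnj (F r k i) * F r k j) / ?N)"
    unfolding S_def sum_Fpl_fourier_parseval[OF p t] using p0 by simp
  also have "\<dots> = (\<Sum>r\<in>?F. adj_mult d (F r) i j) / ?N"
    unfolding adj_mult_def sum_divide_distrib by (rule sum.swap)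
  finally show ?thesis .
qed

lemma pos_semidef_fourier_defect:
  assumes p: "prime p" and t: "0 < t" "t < p" and M: "\<forall>r\<in>Fpl p l. is_povm d {..<p} (M r)"
  shows "pos_semidef d (\<lambda>i j. kdelta i j - (\<Sum>x\<in>Fpl p l. adj_mult d (fourier p l t (\<lambda>r. observable p t (M r)) x) i j))"
  unfolding pos_semidef_def
proof
  fix f
  let ?F = "Fpl p l" and ?N = "of_nat (p ^ l) :: complex"
  define q where "q r = (\<Sum>k<d. (cmod (\<Sum>j<d. observable p t (M r) k j * f j))\<^sup>2)" for r
  define n where "n = (\<Sum>j<d. (cmod (f j))\<^sup>2)"
  have q_le: "q r \<le> n" if "r \<in> ?F" for r
    using qform_adj_mult_observable_le[OF M[rule_format, OF that]] unfolding q_def n_def qform_adj_mult by simp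
  have "qform d (\<lambda>i j. \<Sum>x\<in>?F. adj_mult d (fourier p l t (\<lambda>r. observable p t (M r)) x) i j) f =
      qform d (\<lambda>i j. (1 / ?N) * (\<Sum>r\<in>?F. adj_mult d (observable p t (M r)) i j)) f"
    by (rule qform_cong) (simp add: sum_adj_mult_fourier[OF p t])
  also have "\<dots> = of_real ((\<Sum>r\<in>?F. q r) / real (p ^ l))"
    unfolding qform_scale qform_sum qform_adj_mult q_def by (simp add: of_real_sum)
  finally have "qform d (\<lambda>i j. kdelta i j - (\<Sum>x\<in>?F. adj_mult d (fourier p l t (\<lambda>r. observable p t (M r)) x) i j)) f =
      of_real (n - (\<Sum>r\<in>?F. q r) / real (p ^ l))"
    unfolding qform_diff qform_kdelta n_def by simp
  moreover have "(\<Sum>r\<in>?F. q r) \<le> real (p ^ l) * n"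
    using sum_bounded_above[of ?F q n] q_le by (simp add: card_Fpl)
  then have "(\<Sum>r\<in>?F. q r) / real (p ^ l) \<le> n"
    using p prime_gt_0_nat by (simp add: divide_le_eq mult.commute)
  ultimately show "qform d (\<lambda>i j. kdelta i j - (\<Sum>x\<in>?F. adj_mult d (fourier p l t (\<lambda>r. observable p t (M r)) x) i j)) f \<in> \<real> \<and>
      0 \<le> Re (qform d (\<lambda>i j. kdelta i j - (\<Sum>x\<in>?F. adj_mult d (fourier p l t (\<lambda>r. observable p t (M r)) x) i j)) f)"
    by simp
qed

definition completed_povm :: "nat \<Rightarrow> 'a set \<Rightarrow> 'a \<Rightarrow> ('a \<Rightarrow> nat \<Rightarrow> nat \<Rightarrow> complex) \<Rightarrow> 'a \<Rightarrow> complex mat" where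
  "completed_povm d S x0 A x =
    mat d d (\<lambda>(i, j). A x i j + (if x = x0 then kdelta i j - (\<Sum>y\<in>S. A y i j) else 0))"

lemma is_povm_completed_povm:
  assumes S: "finite S" "x0 \<in> S" and A: "\<forall>x\<in>S. pos_semidef d (A x)"
    and defect: "pos_semidef d (\<lambda>i j. kdelta i j - (\<Sum>y\<in>S. A y i j))"
  shows "is_povm d S (completed_povm d S x0 A)"
  unfolding is_povm_def
proof (intro conjI ballI allI impI S(1))
  fix x assume "x \<in> S"
  then have "pos_semidef d (\<lambda>i j. A x i j + (if x = x0 then kdelta i j - (\<Sum>y\<in>S. A y i j) else 0))"
    using A defect by (intro pos_semidef_add pos_semidef_if) auto
  then show "psd d (completed_povm d S x0 A x)"
    unfolding psd_iff_pos_semidef completed_povm_def by (auto elim: pos_semidef_cong)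
next
  fix i j assume "i < d" "j < d"
  then show "(\<Sum>x\<in>S. completed_povm d S x0 A x $$ (i, j)) = kdelta i j"
    using S unfolding completed_povm_def by (simp add: sum.distrib)
qed

definition guess_povm :: "nat \<Rightarrow> nat \<Rightarrow> nat \<Rightarrow> nat \<Rightarrow> (nat list \<Rightarrow> nat \<Rightarrow> complex mat) \<Rightarrow> nat list \<Rightarrow> complex mat" where
  "guess_povm d p l t M = completed_povm d (Fpl p l) (replicate l 0)
    (\<lambda>x. adj_mult d (fourier p l t (\<lambda>r. observable p t (M r)) x))"

lemma is_povm_guess_povm:
  assumes "prime p" "0 < t" "t < p" "\<forall>r\<in>Fpl p l. is_povm d {..<p} (M r)"
  shows "is_povm d (Fpl p l) (guess_povm d p l t M)"
  unfolding guess_povm_def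
  using assms prime_gt_0_nat replicate_zero_in_Fpl pos_semidef_adj_mult pos_semidef_fourier_defect
  by (intro is_povm_completed_povm) auto

lemma cq_state_pos_semidef:
  "cq_state p l dB dC \<rho> \<Longrightarrow> x \<in> Fpl p l \<Longrightarrow> y \<in> Fpl p l \<Longrightarrow> pos_semidef (dB * dC) (entries (\<rho> x y))"
  unfolding cq_state_def psd_iff_pos_semidef by blast

lemma cq_state_carrier:
  "cq_state p l dB dC \<rho> \<Longrightarrow> x \<in> Fpl p l \<Longrightarrow> y \<in> Fpl p l \<Longrightarrow> \<rho> x y \<in> carrier_mat (dB * dC) (dB * dC)"
  unfolding cq_state_def psd_def by blast

lemma cq_state_trace:
  assumes "cq_state p l dB dC \<rho>"
  shows "(\<Sum>x\<in>Fpl p l. \<Sum>y\<in>Fpl p l. \<Sum>I<dB * dC. \<rho> x y $$ (I, I)) = 1"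
proof -
  have "dim_row (\<rho> x y) = dB * dC" if "x \<in> Fpl p l" "y \<in> Fpl p l" for x y
    using cq_state_carrier[OF assms that] by simp
  then have "(\<Sum>x\<in>Fpl p l. \<Sum>y\<in>Fpl p l. \<Sum>I<dB * dC. \<rho> x y $$ (I, I)) =
      (\<Sum>x\<in>Fpl p l. \<Sum>y\<in>Fpl p l. mtrace (\<rho> x y))"
    unfolding mtrace_def by simp
  then show ?thesis using assms unfolding cq_state_def by simp
qed

lemma guess_prob_eq_tensor_trace:
  assumes "cq_state p l dB dC \<rho>" "is_povm dB (Fpl p l) M" "is_povm dC (Fpl p l) N"
  shows "guess_prob p l \<rho> M N =
    (\<Sum>x\<in>Fpl p l. \<Sum>y\<in>Fpl p l. Re (tensor_trace dB dC (entries (\<rho> x y)) (entries (M x)) (entries (N y))))"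
  unfolding guess_prob_def
proof (intro sum.cong refl)
  fix x y assume "x \<in> Fpl p l" "y \<in> Fpl p l"
  then show "Re (mtrace (kron (M x) (N y) * \<rho> x y)) =
      Re (tensor_trace dB dC (entries (\<rho> x y)) (entries (M x)) (entries (N y)))"
    using mtrace_kron_mult[OF is_povm_carrier[OF assms(2)] is_povm_carrier[OF assms(3)] cq_state_carrier[OF assms(1)]]
    by simp
qed

lemma guess_prob_le_1:
  assumes cq: "cq_state p l dB dC \<rho>" and M: "is_povm dB (Fpl p l) M" and N: "is_povm dC (Fpl p l) N"
  shows "guess_prob p l \<rho> M N \<le> 1"
proof -
  let ?F = "Fpl p l"
  let ?g = "\<lambda>x y x' y'. Re (tensor_trace dB dC (entries (\<rho> x y)) (entries (M x')) (entries (N y')))"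
  have nonneg: "0 \<le> ?g x y x' y'" if "x \<in> ?F" "y \<in> ?F" "x' \<in> ?F" "y' \<in> ?F" for x y x' y'
    by (rule tensor_trace_nonneg(2)[OF cq_state_pos_semidef[OF cq that(1,2)]
          is_povm_pos_semidef[OF M that(3)] is_povm_pos_semidef[OF N that(4)]])
  have total: "(\<Sum>x'\<in>?F. \<Sum>y'\<in>?F. ?g x y x' y') = Re (\<Sum>I<dB * dC. \<rho> x y $$ (I, I))" for x y
  proof -
    have "(\<Sum>x'\<in>?F. \<Sum>y'\<in>?F. ?g x y x' y') =
        Re (tensor_trace dB dC (entries (\<rho> x y)) (\<lambda>i j. \<Sum>x'\<in>?F. M x' $$ (i, j)) (\<lambda>i j. \<Sum>y'\<in>?F. N y' $$ (i, j)))"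
      by (simp only: tensor_trace_sum_left tensor_trace_sum_right Re_sum)
    also have "\<dots> = Re (tensor_trace dB dC (entries (\<rho> x y)) kdelta kdelta)"
      using is_povm_sum[OF M] is_povm_sum[OF N] by (intro arg_cong[where f = Re] tensor_trace_cong) auto
    finally show ?thesis by (simp add: tensor_trace_kdelta)
  qed
  have "?g x y x y \<le> Re (\<Sum>I<dB * dC. \<rho> x y $$ (I, I))" if "x \<in> ?F" "y \<in> ?F" for x y
  proof -
    have "?g x y x y \<le> (\<Sum>y'\<in>?F. ?g x y x y')"
      using nonneg that by (intro member_le_sum) auto
    also have "\<dots> \<le> (\<Sum>x'\<in>?F. \<Sum>y'\<in>?F. ?g x y x' y')"
      using nonneg that by (intro member_le_sum[where f = "\<lambda>x'. \<Sum>y'\<in>?F. ?g x y x' y'"] sum_nonneg) auto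
    finally show ?thesis unfolding total .
  qed
  then have "guess_prob p l \<rho> M N \<le> (\<Sum>x\<in>?F. \<Sum>y\<in>?F. Re (\<Sum>I<dB * dC. \<rho> x y $$ (I, I)))"
    unfolding guess_prob_eq_tensor_trace[OF cq M N] by (intro sum_mono) auto
  also have "\<dots> = 1"
    using cq_state_trace[OF cq] by (simp flip: Re_sum)
  finally show ?thesis .
qed

lemma Re_sum_tensor_trace_le_sqrt:
  assumes R: "\<forall>i\<in>I. pos_semidef (n * m) (R i)"
    and trace: "(\<Sum>i\<in>I. Re (\<Sum>J<n * m. R i J J)) = 1"
  shows "Re (\<Sum>i\<in>I. tensor_trace n m (R i) (X i) (Y i)) \<le>
    sqrt (\<Sum>i\<in>I. Re (tensor_trace n m (R i) (adj_mult n (X i)) (adj_mult m (Y i))))"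
proof -
  define tr where "tr i = Re (\<Sum>J<n * m. R i J J)" for i
  define S where "S i = Re (tensor_trace n m (R i) (adj_mult n (X i)) (adj_mult m (Y i)))" for i
  have tr: "0 \<le> tr i" if "i \<in> I" for i
    unfolding tr_def Re_sum using pos_semidef_diag(2)[OF R[rule_format, OF that]] by (auto intro: sum_nonneg)
  have S: "0 \<le> S i" if "i \<in> I" for i
    unfolding S_def by (rule tensor_trace_nonneg(2)[OF R[rule_format, OF that] pos_semidef_adj_mult pos_semidef_adj_mult])
  have cs: "cmod (tensor_trace n m (R i) (X i) (Y i)) \<le> sqrt (tr i) * sqrt (S i)" if "i \<in> I" for i
  proof -
    have "cmod (tensor_trace n m (R i) (X i) (Y i)) \<le> sqrt (tr i * S i)"
      unfolding tr_def S_def by (rule real_le_rsqrt, rule tensor_trace_cauchy_schwarz[OF R[rule_format, OF that]])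
    then show ?thesis by (simp add: real_sqrt_mult)
  qed
  have "Re (\<Sum>i\<in>I. tensor_trace n m (R i) (X i) (Y i)) \<le> (\<Sum>i\<in>I. cmod (tensor_trace n m (R i) (X i) (Y i)))"
    by (rule order_trans[OF complex_Re_le_cmod norm_sum])
  also have "\<dots> \<le> (\<Sum>i\<in>I. sqrt (tr i) * sqrt (S i))"
    using cs by (rule sum_mono)
  also have "\<dots> \<le> sqrt ((\<Sum>i\<in>I. (sqrt (tr i))\<^sup>2) * (\<Sum>i\<in>I. (sqrt (S i))\<^sup>2))"
    by (rule real_le_rsqrt, rule Cauchy_Schwarz_ineq_sum)
  also have "\<dots> = sqrt (\<Sum>i\<in>I. S i)"
    using tr S trace unfolding tr_def[symmetric] by simp
  finally show ?thesis unfolding S_def .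
qed

lemma min_sqrt_one_le_powr:
  fixes \<delta> :: real
  assumes "0 \<le> \<delta>"
  shows "min (sqrt \<delta>) 1 \<le> \<delta> powr (1 / 3)"
proof (cases "\<delta> \<le> 1")
  case True
  then have "min (sqrt \<delta>) 1 = \<delta> powr (1 / 2)" using assms by (simp add: powr_half_sqrt)
  also have "\<dots> \<le> \<delta> powr (1 / 3)" using True assms by (intro powr_mono') auto
  finally show ?thesis .
next
  case False
  then show ?thesis by (simp add: ge_one_powr_ge_zero)
qed

lemma fourier_observable:
  "fourier p l t (\<lambda>r. observable p t (M r)) x i j =
    (\<Sum>r\<in>Fpl p l. \<Sum>a<p. unit_root p ^ (t * a) * cnj (unit_root p) ^ (t * dotp p x r) / of_nat (p ^ l) *
      M r a $$ (i, j))"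
  unfolding fourier_def observable_def by (simp add: sum_distrib_left sum_divide_distrib mult_ac)

lemma sum_tensor_trace_fourier_observable:
  assumes "p > 0"
  shows "(\<Sum>t<p. tensor_trace n m R (fourier p l t (\<lambda>r. observable p t (P r)) x)
      (fourier p l t (\<lambda>r. observable p t (Q r)) y)) =
    of_nat p * (\<Sum>r\<in>Fpl p l. \<Sum>r'\<in>Fpl p l. of_real (1 / real p ^ (2 * l)) *
      (\<Sum>a<p. \<Sum>b<p. if win_event p x y r r' a b
        then tensor_trace n m R (entries (P r a)) (entries (Q r' b)) else 0))"
proof -
  let ?F = "Fpl p l" and ?J = "Fpl p l \<times> {..<p} \<times> Fpl p l \<times> {..<p}"
  define \<chi> where "\<chi> t z r a = unit_root p ^ (t * a) * cnj (unit_root p) ^ (t * dotp p z r)" for t z r a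
  define T where "T r a r' b = tensor_trace n m R (entries (P r a)) (entries (Q r' b))" for r a r' b
  define c where "c = (of_nat (p ^ l) :: complex)"
  have "real p ^ (2 * l) = real p ^ l * real p ^ l"
    by (subst mult_2) (rule power_add)
  then have c2: "of_real (1 / real p ^ (2 * l)) = 1 / (c * c)"
    unfolding c_def by simp
  have "tensor_trace n m R (fourier p l t (\<lambda>r. observable p t (P r)) x) (fourier p l t (\<lambda>r. observable p t (Q r)) y) =
      (\<Sum>(r, a, r', b)\<in>?J. \<chi> t x r a * \<chi> t y r' b / (c * c) * T r a r' b)" for t
    unfolding fourier_observable
    by (simp only: tensor_trace_sum_left tensor_trace_sum_right tensor_trace_scale_left tensor_trace_scale_right)
      (simp add: sum.cartesian_product[symmetric] sum_distrib_left \<chi>_def T_def c_def mult_ac)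
  then have "(\<Sum>t<p. tensor_trace n m R (fourier p l t (\<lambda>r. observable p t (P r)) x)
      (fourier p l t (\<lambda>r. observable p t (Q r)) y)) =
      (\<Sum>(r, a, r', b)\<in>?J. (\<Sum>t<p. \<chi> t x r a * \<chi> t y r' b) / (c * c) * T r a r' b)"
    by (simp add: sum.swap[where A = "{..<p}" and B = ?J] sum_distrib_right sum_divide_distrib case_prod_unfold)
  also have "\<dots> = (\<Sum>(r, a, r', b)\<in>?J. if win_event p x y r r' a b then of_nat p / (c * c) * T r a r' b else 0)"
    unfolding \<chi>_def using sum_unit_root_win_event[OF assms] by (intro sum.cong refl) auto
  also have "\<dots> = of_nat p * (\<Sum>r\<in>?F. \<Sum>a<p. \<Sum>r'\<in>?F. \<Sum>b<p. of_real (1 / real p ^ (2 * l)) *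
      (if win_event p x y r r' a b then T r a r' b else 0))"
    unfolding c2 sum.cartesian_product[symmetric] sum_distrib_left by (intro sum.cong refl) simp
  also have "\<dots> = of_nat p * (\<Sum>r\<in>?F. \<Sum>r'\<in>?F. of_real (1 / real p ^ (2 * l)) *
      (\<Sum>a<p. \<Sum>b<p. if win_event p x y r r' a b then T r a r' b else 0))"
    unfolding sum_distrib_left by (rule sum.cong[OF refl], rule sum.swap)
  finally show ?thesis unfolding T_def .
qed

lemma fourier_observable_0:
  assumes "p > 0" "\<forall>r\<in>Fpl p l. is_povm d {..<p} (M r)"
  shows "\<forall>i<d. \<forall>j<d. fourier p l 0 (\<lambda>r. observable p 0 (M r)) x i j = kdelta i j"
proof (intro allI impI)
  fix i j assume "i < d" "j < d"
  then have "observable p 0 (M r) i j = kdelta i j" if "r \<in> Fpl p l" for r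
    using is_povm_sum[OF assms(2)[rule_format, OF that]] unfolding observable_def by simp
  then show "fourier p l 0 (\<lambda>r. observable p 0 (M r)) x i j = kdelta i j"
    using assms(1) unfolding fourier_def by (simp add: card_Fpl)
qed

locale inner_product_game =
  fixes p l dB dC :: nat and \<rho> :: "nat list \<Rightarrow> nat list \<Rightarrow> complex mat"
    and P Q :: "nat list \<Rightarrow> nat \<Rightarrow> complex mat"
  assumes prime: "prime p"
    and cq: "cq_state p l dB dC \<rho>"
    and P: "\<forall>r\<in>Fpl p l. is_povm dB {..<p} (P r)"
    and Q: "\<forall>r\<in>Fpl p l. is_povm dC {..<p} (Q r)"
begin

abbreviation bob :: "nat \<Rightarrow> nat list \<Rightarrow> nat \<Rightarrow> nat \<Rightarrow> complex" where
  "bob t \<equiv> fourier p l t (\<lambda>r. observable p t (P r))"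

abbreviation charlie :: "nat \<Rightarrow> nat list \<Rightarrow> nat \<Rightarrow> nat \<Rightarrow> complex" where
  "charlie t \<equiv> fourier p l t (\<lambda>r. observable p t (Q r))"

text \<open>\<open>bias t\<close> is the \<open>t\<close>-th Fourier coefficient of the law of
  \<open>G\<^sup>B + G\<^sup>C - X\<^sup>B\<cdot>r\<^sup>B - X\<^sup>C\<cdot>r\<^sup>C\<close> in \<open>\<int>/p\<close>.\<close>
definition bias :: "nat \<Rightarrow> real" where
  "bias t = Re (\<Sum>x\<in>Fpl p l. \<Sum>y\<in>Fpl p l. tensor_trace dB dC (entries (\<rho> x y)) (bob t x) (charlie t y))"

definition guess_value :: "nat \<Rightarrow> real" where
  "guess_value t = (\<Sum>x\<in>Fpl p l. \<Sum>y\<in>Fpl p l.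
    Re (tensor_trace dB dC (entries (\<rho> x y)) (adj_mult dB (bob t x)) (adj_mult dC (charlie t y))))"

lemma p_pos: "p > 0"
  using prime prime_gt_0_nat by blast

lemma win_prob_eq_sum_bias: "win_prob p l \<rho> P Q = (\<Sum>t<p. bias t) / p"
proof -
  let ?F = "Fpl p l"
  let ?tt = "\<lambda>x y r r' a b. tensor_trace dB dC (entries (\<rho> x y)) (entries (P r a)) (entries (Q r' b))"
  have tt: "Re (mtrace (kron (P r a) (Q r' b) * \<rho> x y)) = Re (?tt x y r r' a b)"
    if "x \<in> ?F" "y \<in> ?F" "r \<in> ?F" "r' \<in> ?F" "a < p" "b < p" for x y r r' a b
    using mtrace_kron_mult[OF is_povm_carrier[OF P[rule_format, OF that(3)]] is_povm_carrier[OF Q[rule_format, OF that(4)]]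
        cq_state_carrier[OF cq that(1,2)]] that by simp
  have "(\<Sum>t<p. bias t) = Re (\<Sum>x\<in>?F. \<Sum>y\<in>?F. \<Sum>t<p. tensor_trace dB dC (entries (\<rho> x y)) (bob t x) (charlie t y))"
    unfolding bias_def Re_sum[symmetric]
    by (rule arg_cong[where f = Re], subst sum.swap, rule sum.cong[OF refl], rule sum.swap)
  also have "\<dots> = real p * (\<Sum>x\<in>?F. \<Sum>y\<in>?F. \<Sum>r\<in>?F. \<Sum>r'\<in>?F. 1 / real p ^ (2 * l) *
      (\<Sum>a<p. \<Sum>b<p. if win_event p x y r r' a b then Re (?tt x y r r' a b) else 0))"
    by (simp add: sum_tensor_trace_fourier_observable[OF p_pos] Re_sum if_distrib[of Re] sum_distrib_left cong: if_cong)
  also have "\<dots> = real p * win_prob p l \<rho> P Q"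
    unfolding win_prob_def using tt by (simp cong: if_cong)
  finally show ?thesis using p_pos by simp
qed

lemma bias_0: "bias 0 = 1"
  unfolding bias_def
    tensor_trace_cong[OF fourier_observable_0[OF p_pos P] fourier_observable_0[OF p_pos Q]]
    tensor_trace_kdelta cq_state_trace[OF cq] by simp

lemma bias_le_sqrt_guess_value: "bias t \<le> sqrt (guess_value t)"
proof -
  let ?I = "Fpl p l \<times> Fpl p l"
  have "(\<Sum>(x, y)\<in>?I. Re (\<Sum>J<dB * dC. entries (\<rho> x y) J J)) = 1"
    using cq_state_trace[OF cq] by (simp add: sum.cartesian_product[symmetric] flip: Re_sum)
  then have "Re (\<Sum>(x, y)\<in>?I. tensor_trace dB dC (entries (\<rho> x y)) (bob t x) (charlie t y)) \<le>
      sqrt (\<Sum>(x, y)\<in>?I. Re (tensor_trace dB dC (entries (\<rho> x y)) (adj_mult dB (bob t x)) (adj_mult dC (charlie t y))))"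
    using Re_sum_tensor_trace_le_sqrt[of ?I dB dC "\<lambda>(x, y). entries (\<rho> x y)" "\<lambda>(x, y). bob t x" "\<lambda>(x, y). charlie t y"]
      cq_state_pos_semidef[OF cq] by (auto simp: case_prod_unfold)
  then show ?thesis
    unfolding bias_def guess_value_def by (simp add: sum.cartesian_product[symmetric])
qed

lemma guess_value_nonneg: "0 \<le> guess_value t"
  unfolding guess_value_def
  using tensor_trace_nonneg(2)[OF cq_state_pos_semidef[OF cq] pos_semidef_adj_mult pos_semidef_adj_mult]
  by (intro sum_nonneg) blast

lemma guess_value_le_guess_prob:
  assumes t: "0 < t" "t < p"
  shows "guess_value t \<le> guess_prob p l \<rho> (guess_povm dB p l t P) (guess_povm dC p l t Q)"
proof -
  let ?F = "Fpl p l" and ?x0 = "replicate l 0"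
  define DB where "DB i j = kdelta i j - (\<Sum>x\<in>?F. adj_mult dB (bob t x) i j)" for i j
  define DC where "DC i j = kdelta i j - (\<Sum>y\<in>?F. adj_mult dC (charlie t y) i j)" for i j
  have DB: "pos_semidef dB DB" unfolding DB_def by (rule pos_semidef_fourier_defect[OF prime t P])
  have DC: "pos_semidef dC DC" unfolding DC_def by (rule pos_semidef_fourier_defect[OF prime t Q])
  have "Re (tensor_trace dB dC (entries (\<rho> x y)) (adj_mult dB (bob t x)) (adj_mult dC (charlie t y))) \<le>
      Re (tensor_trace dB dC (entries (\<rho> x y)) (entries (guess_povm dB p l t P x)) (entries (guess_povm dC p l t Q y)))"
    if "x \<in> ?F" "y \<in> ?F" for x y
  proof -
    have "tensor_trace dB dC (entries (\<rho> x y)) (entries (guess_povm dB p l t P x)) (entries (guess_povm dC p l t Q y)) =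
        tensor_trace dB dC (entries (\<rho> x y)) (\<lambda>i j. adj_mult dB (bob t x) i j + (if x = ?x0 then DB i j else 0))
          (\<lambda>i j. adj_mult dC (charlie t y) i j + (if y = ?x0 then DC i j else 0))"
      unfolding guess_povm_def completed_povm_def DB_def DC_def by (intro tensor_trace_cong) auto
    then show ?thesis
      using tensor_trace_mono[OF cq_state_pos_semidef[OF cq that] pos_semidef_adj_mult
          pos_semidef_if[OF DB] pos_semidef_adj_mult pos_semidef_if[OF DC]] by simp
  qed
  then show ?thesis
    unfolding guess_value_def
    using guess_prob_eq_tensor_trace[OF cq is_povm_guess_povm[OF prime t P] is_povm_guess_povm[OF prime t Q]]
    by (simp add: sum_mono)
qed

theorem win_prob_le:
  assumes guess: "\<forall>M N. is_povm dB (Fpl p l) M \<longrightarrow> is_povm dC (Fpl p l) N \<longrightarrow> guess_prob p l \<rho> M N \<le> \<delta>"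
  shows "0 \<le> \<delta>" and "win_prob p l \<rho> P Q \<le> 1 / real p + min (sqrt \<delta>) 1"
proof -
  have value_le: "guess_value t \<le> \<delta> \<and> guess_value t \<le> 1" if "0 < t" "t < p" for t
    using guess_value_le_guess_prob[OF that] guess is_povm_guess_povm[OF prime that P] is_povm_guess_povm[OF prime that Q]
      guess_prob_le_1[OF cq is_povm_guess_povm[OF prime that P] is_povm_guess_povm[OF prime that Q]]
    by fastforce
  have "1 < p" using prime prime_gt_1_nat by blast
  then show "0 \<le> \<delta>" using value_le[of 1] guess_value_nonneg[of 1] by linarith
  then have bias_le: "bias t \<le> min (sqrt \<delta>) 1" if "0 < t" "t < p" for t
    using bias_le_sqrt_guess_value[of t] value_le[OF that] by (simp add: order_trans real_sqrt_le_mono)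
  obtain q where q: "p = Suc q" using p_pos gr0_conv_Suc by blast
  have "(\<Sum>t<p. bias t) = 1 + (\<Sum>t<q. bias (Suc t))"
    using sum.lessThan_Suc_shift[of bias q] q bias_0 by simp
  also have "\<dots> \<le> 1 + real q * min (sqrt \<delta>) 1"
    using sum_mono[of "{..<q}" "\<lambda>t. bias (Suc t)" "\<lambda>_. min (sqrt \<delta>) 1"] bias_le q by simp
  also have "\<dots> \<le> 1 + real p * min (sqrt \<delta>) 1"
    using q \<open>0 \<le> \<delta>\<close> by (simp add: mult_right_mono)
  finally have "(\<Sum>t<p. bias t) / p \<le> (1 + real p * min (sqrt \<delta>) 1) / p"
    by (rule divide_right_mono) simp
  also have "\<dots> = 1 / real p + min (sqrt \<delta>) 1"
    using p_pos by (simp add: add_divide_distrib)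
  finally show "win_prob p l \<rho> P Q \<le> 1 / real p + min (sqrt \<delta>) 1"
    unfolding win_prob_eq_sum_bias .
qed

end

theorem lemma31:
  shows "\<exists>C::real. \<forall>(p::nat) (l::nat) (dB::nat) (dC::nat) \<rho> (\<delta>::real) P Q.
    p \<in> {2, 3} \<longrightarrow>
    cq_state p l dB dC \<rho> \<longrightarrow>
    (\<forall>M N. is_povm dB (Fpl p l) M \<longrightarrow> is_povm dC (Fpl p l) N \<longrightarrow>
        guess_prob p l \<rho> M N \<le> \<delta>) \<longrightarrow>
    (\<forall>rB \<in> Fpl p l. is_povm dB {..<p} (P rB)) \<longrightarrow>
    (\<forall>rC \<in> Fpl p l. is_povm dC {..<p} (Q rC)) \<longrightarrow>
    win_prob p l \<rho> P Q \<le> 1 / real p + C * \<delta> powr (1/3)"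
proof (intro exI[of _ 1] allI impI)
  fix p l dB dC :: nat and \<rho> :: "nat list \<Rightarrow> nat list \<Rightarrow> complex mat" and \<delta> :: real
    and P Q :: "nat list \<Rightarrow> nat \<Rightarrow> complex mat"
  assume p: "p \<in> {2, 3}" and cq: "cq_state p l dB dC \<rho>"
    and guess: "\<forall>M N. is_povm dB (Fpl p l) M \<longrightarrow> is_povm dC (Fpl p l) N \<longrightarrow> guess_prob p l \<rho> M N \<le> \<delta>"
    and P: "\<forall>rB \<in> Fpl p l. is_povm dB {..<p} (P rB)"
    and Q: "\<forall>rC \<in> Fpl p l. is_povm dC {..<p} (Q rC)"
  have "prime p" using p by auto
  then interpret inner_product_game p l dB dC \<rho> P Q
    using cq P Q by unfold_locales
  show "win_prob p l \<rho> P Q \<le> 1 / real p + 1 * \<delta> powr (1/3)"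
    using win_prob_le[OF guess] min_sqrt_one_le_powr by fastforce
qed

end
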